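(* Let $G$ be a trigraph containing two disjoint vertical sets $V^j=\{x^j,y^j\}\cup V(F^j)$ and $V^{j'}=\{x^{j'},y^{j'}\}\cup V(F^{j'})$ with an arc from $V^j$ to $V^{j'}$, where both fence gadgets $F^j$ and $F^{j'}$ satisfy the attachment rule in $G$. Then in any partial $4$-sequence from $G$, any contraction involving two vertices of $V^{j'}$ is preceded by (or is itself) the contraction that puts $x^j$ and $y^j$ into the same part.
   Context: A trigraph $G$ consists of a vertex set $V(G)$ and two disjoint sets of unordered pairs of distinct vertices: black edges and red edges; the red graph is formed by the red edges. Contracting two distinct vertices $u,v$ replaces them by a new vertex $w$ such that, for every other vertex $z$, $wz$ is black if $uz,vz$ are both black, a non-edge if both are non-edges, and red otherwise. A partial $d$-sequence from $G$ is a sequence of trigraphs starting at $G$, each obtained from the previous by one contraction, all of maximum red degree at most $d$. Each vertex $u$ of a later trigraph corresponds to the set $u(G)$ (its part) of vertices of $G$ merged into it; a contraction of $u,u'$ involves two vertices $v,v'$ of $G$ if $v\in u(G),v'\in u'(G)$ or vice versa. A fence gadget is a trigraph $F$ on $A\cup B$, $A=\{a_1,\dots,a_6\}$, $B=\{b_1,\dots,b_6\}$, whose black edges are those of the cycles $a_1a_2a_3a_4a_5a_6a_1$ and $b_1b_2b_3b_4b_5b_6b_1$ together with $b_1a_6$, and whose red edges are $a_ib_i$ for $i\in[6]$ and $a_ib_{i+1}$ for $i\in[5]$. Inside a trigraph $G$, $F$ is attached to a nonempty set $S\subseteq V(G)\setminus V(F)$ if every vertex of $A$ is joined by a black edge to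 every vertex of $S$ and no vertex of $B$ is adjacent to a vertex of $S$. $F$ satisfies the attachment rule in $G$ if $V(F)$ is the vertex set of a connected component of the red graph of $G$ and there is a set $X\subseteq V(G)\setminus(V(F)\cup S)$ such that every vertex of $A$ has exactly $X\cup S$ as its set of neighbours outside $V(F)$, every vertex of $B$ has exactly $X$ as its set of neighbours outside $V(F)$ (all these edges black), and every vertex of $X$ is adjacent to every vertex of $S$. A vertical set is a set $\{x,y\}\cup V(F)$ where $F$ is a fence gadget attached to $\{x,y\}$; $\{x,y\}$ is its vertical pair. An arc from a vertical set $V^j$ to a vertical set $V^{j'}$ means that $x^{j'}$ is joined by black edges to every vertex of $V^j$ while $y^{j'}$ has no neighbour in $V^j$. *)

theory Defs
  imports Main
begin

record 'v trigraph =
  verts :: "'v set"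
  black :: "'v set set"
  red   :: "'v set set"

definition wf_trigraph :: "'v trigraph \<Rightarrow> bool" where
  "wf_trigraph T \<longleftrightarrow> finite (verts T)
     \<and> black T \<subseteq> {{p, q} | p q. p \<in> verts T \<and> q \<in> verts T \<and> p \<noteq> q}
     \<and> red T \<subseteq> {{p, q} | p q. p \<in> verts T \<and> q \<in> verts T \<and> p \<noteq> q}
     \<and> black T \<inter> red T = {}"

definition adjacent :: "'v trigraph \<Rightarrow> 'v \<Rightarrow> 'v \<Rightarrow> bool" where
  "adjacent T p q \<longleftrightarrow> {p, q} \<in> black T \<or> {p, q} \<in> red T"

definition contract :: "'v trigraph \<Rightarrow> 'v \<Rightarrow> 'v \<Rightarrow> 'v \<Rightarrow> 'v trigraph" where
  "contract T u v w =
     \<lparr> verts = (verts T - {u, v}) \<union> {w},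
       black = {e \<in> black T. u \<notin> e \<and> v \<notin> e}
               \<union> {{w, z} | z. z \<in> verts T - {u, v} \<and> {u, z} \<in> black T \<and> {v, z} \<in> black T},
       red = {e \<in> red T. u \<notin> e \<and> v \<notin> e}
               \<union> {{w, z} | z. z \<in> verts T - {u, v}
                    \<and> \<not> ({u, z} \<in> black T \<and> {v, z} \<in> black T)
                    \<and> \<not> (\<not> adjacent T u z \<and> \<not> adjacent T v z)} \<rparr>"

definition red_deg :: "'v trigraph \<Rightarrow> 'v \<Rightarrow> nat" where
  "red_deg T p = card {z \<in> verts T. {p, z} \<in> red T}"

definition max_red_deg_le :: "'v trigraph \<Rightarrow> nat \<Rightarrow> bool" where
  "max_red_deg_le T d \<longleftrightarrow> (\<forall>p \<in> verts T. red_deg T p \<le> d)"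

text \<open>The trigraph G with every vertex p replaced by its part {p}.  Vertices of
  later trigraphs of a contraction sequence are their parts (sets of vertices of G).\<close>
definition lift :: "'v trigraph \<Rightarrow> 'v set trigraph" where
  "lift G = \<lparr> verts = (\<lambda>p. {p}) ` verts G,
              black = {{{p}, {q}} | p q. {p, q} \<in> black G},
              red = {{{p}, {q}} | p q. {p, q} \<in> red G} \<rparr>"

fun trig_seq :: "'v set trigraph \<Rightarrow> ('v set \<times> 'v set) list \<Rightarrow> 'v set trigraph list" where
  "trig_seq T [] = [T]"
| "trig_seq T ((u, v) # cs) = T # trig_seq (contract T u v (u \<union> v)) cs"

definition seq_trigraphs :: "'v trigraph \<Rightarrow> ('v set \<times> 'v set) list \<Rightarrow> 'v set trigraph list" where
  "seq_trigraphs G cs = trig_seq (lift G) cs"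

definition partial_d_sequence :: "'v trigraph \<Rightarrow> nat \<Rightarrow> ('v set \<times> 'v set) list \<Rightarrow> bool" where
  "partial_d_sequence G d cs \<longleftrightarrow>
     (\<forall>i < length cs. fst (cs ! i) \<in> verts (seq_trigraphs G cs ! i)
                    \<and> snd (cs ! i) \<in> verts (seq_trigraphs G cs ! i)
                    \<and> fst (cs ! i) \<noteq> snd (cs ! i))
     \<and> (\<forall>T \<in> set (seq_trigraphs G cs). max_red_deg_le T d)"

definition involves :: "'v set \<times> 'v set \<Rightarrow> 'v \<Rightarrow> 'v \<Rightarrow> bool" where
  "involves c p q \<longleftrightarrow> (p \<in> fst c \<and> q \<in> snd c) \<or> (q \<in> fst c \<and> p \<in> snd c)"

definition fence_A :: "(nat \<Rightarrow> 'v) \<Rightarrow> 'v set" where "fence_A a = a ` {1..6}"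
definition fence_B :: "(nat \<Rightarrow> 'v) \<Rightarrow> 'v set" where "fence_B b = b ` {1..6}"
definition fence_V :: "(nat \<Rightarrow> 'v) \<Rightarrow> (nat \<Rightarrow> 'v) \<Rightarrow> 'v set" where
  "fence_V a b = fence_A a \<union> fence_B b"

definition fence_black :: "(nat \<Rightarrow> 'v) \<Rightarrow> (nat \<Rightarrow> 'v) \<Rightarrow> 'v set set" where
  "fence_black a b =
     {{a i, a (i + 1)} | i. i \<in> {1..5}} \<union> {{a 6, a 1}}
   \<union> {{b i, b (i + 1)} | i. i \<in> {1..5}} \<union> {{b 6, b 1}}
   \<union> {{b 1, a 6}}"

definition fence_red :: "(nat \<Rightarrow> 'v) \<Rightarrow> (nat \<Rightarrow> 'v) \<Rightarrow> 'v set set" where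
  "fence_red a b = {{a i, b i} | i. i \<in> {1..6}} \<union> {{a i, b (i + 1)} | i. i \<in> {1..5}}"

definition fence_in :: "'v trigraph \<Rightarrow> (nat \<Rightarrow> 'v) \<Rightarrow> (nat \<Rightarrow> 'v) \<Rightarrow> bool" where
  "fence_in G a b \<longleftrightarrow>
     inj_on a {1..6} \<and> inj_on b {1..6} \<and> fence_A a \<inter> fence_B b = {}
     \<and> fence_V a b \<subseteq> verts G
     \<and> {e \<in> black G. e \<subseteq> fence_V a b} = fence_black a b
     \<and> {e \<in> red G. e \<subseteq> fence_V a b} = fence_red a b"

definition attached :: "'v trigraph \<Rightarrow> (nat \<Rightarrow> 'v) \<Rightarrow> (nat \<Rightarrow> 'v) \<Rightarrow> 'v set \<Rightarrow> bool" where
  "attached G a b S \<longleftrightarrow>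
     fence_in G a b \<and> S \<noteq> {} \<and> S \<subseteq> verts G - fence_V a b
     \<and> (\<forall>p \<in> fence_A a. \<forall>s \<in> S. {p, s} \<in> black G)
     \<and> (\<forall>p \<in> fence_B b. \<forall>s \<in> S. \<not> adjacent G p s)"

definition red_rel :: "'v trigraph \<Rightarrow> ('v \<times> 'v) set" where
  "red_rel G = {(p, q). {p, q} \<in> red G}"

definition red_component :: "'v trigraph \<Rightarrow> 'v set \<Rightarrow> bool" where
  "red_component G C \<longleftrightarrow> C \<noteq> {} \<and> C \<subseteq> verts G
     \<and> (\<forall>p \<in> C. \<forall>z \<in> verts G. z \<in> C \<longleftrightarrow> (p, z) \<in> (red_rel G)\<^sup>*)"

definition attachment_rule :: "'v trigraph \<Rightarrow> (nat \<Rightarrow> 'v) \<Rightarrow> (nat \<Rightarrow> 'v) \<Rightarrow> 'v set \<Rightarrow> bool" where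
  "attachment_rule G a b S \<longleftrightarrow>
     red_component G (fence_V a b)
     \<and> (\<exists>X. X \<subseteq> verts G - (fence_V a b \<union> S)
         \<and> (\<forall>p \<in> fence_A a. {z \<in> verts G - fence_V a b. adjacent G p z} = X \<union> S
                            \<and> (\<forall>z \<in> X \<union> S. {p, z} \<in> black G))
         \<and> (\<forall>p \<in> fence_B b. {z \<in> verts G - fence_V a b. adjacent G p z} = X
                            \<and> (\<forall>z \<in> X. {p, z} \<in> black G))
         \<and> (\<forall>x \<in> X. \<forall>s \<in> S. adjacent G x s))"

definition vertical_set :: "'v trigraph \<Rightarrow> 'v \<Rightarrow> 'v \<Rightarrow> (nat \<Rightarrow> 'v) \<Rightarrow> (nat \<Rightarrow> 'v) \<Rightarrow> bool" where
  "vertical_set G x y a b \<longleftrightarrow> x \<noteq> y \<and> attached G a b {x, y}"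

definition vset :: "'v \<Rightarrow> 'v \<Rightarrow> (nat \<Rightarrow> 'v) \<Rightarrow> (nat \<Rightarrow> 'v) \<Rightarrow> 'v set" where
  "vset x y a b = {x, y} \<union> fence_V a b"

text \<open>Arc from the vertical set V to the vertical set with vertical pair (x', y').\<close>
definition arc :: "'v trigraph \<Rightarrow> 'v set \<Rightarrow> 'v \<Rightarrow> 'v \<Rightarrow> bool" where
  "arc G V x' y' \<longleftrightarrow> (\<forall>z \<in> V. {x', z} \<in> black G) \<and> (\<forall>z \<in> V. \<not> adjacent G y' z)"

end

theory Submission
  imports Defs "HOL-Library.Disjoint_Sets"
begin

text \<open>
  Every trigraph of a contraction sequence from G is the quotient of G by a partition of its vertex
  set: two parts are joined black if all pairs between them are black edges, not joined if no pair
  between them is adjacent, and red otherwise (the parts are mixed).  Call a vertex set scattered if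
  no part contains two of its vertices.  If a contraction first puts two vertices of a vertical set
  into one part and they are not its vertical pair, this part is mixed towards at least five other
  vertices of the gadget (a finite check on its 14 vertices); these lie in distinct parts, so the red
  degree exceeds 4.  Hence, as long as x and y lie in different parts, both vertical sets stay
  scattered: for the second one, merging x' with y' is excluded because, through the arc, the new
  part is mixed towards all 14 vertices of the scattered first vertical set.  A contraction involving
  two vertices of the second vertical set would put them into one part.
\<close>

definition black_complete :: "'v trigraph \<Rightarrow> 'v set \<Rightarrow> 'v set \<Rightarrow> bool" where
  "black_complete G P Q \<longleftrightarrow> (\<forall>p\<in>P. \<forall>q\<in>Q. {p, q} \<in> black G)"

definition anticomplete :: "'v trigraph \<Rightarrow> 'v set \<Rightarrow> 'v set \<Rightarrow> bool" where
  "anticomplete G P Q \<longleftrightarrow> (\<forall>p\<in>P. \<forall>q\<in>Q. \<not> adjacent G p q)"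

definition mixed :: "'v trigraph \<Rightarrow> 'v set \<Rightarrow> 'v set \<Rightarrow> bool" where
  "mixed G P Q \<longleftrightarrow> \<not> black_complete G P Q \<and> \<not> anticomplete G P Q"

definition pair_edges :: "'a set \<Rightarrow> ('a \<Rightarrow> 'a \<Rightarrow> bool) \<Rightarrow> 'a set set" where
  "pair_edges A R = {{p, q} | p q. p \<in> A \<and> q \<in> A \<and> p \<noteq> q \<and> R p q}"

definition quotient_trigraph :: "'v trigraph \<Rightarrow> 'v set set \<Rightarrow> 'v set trigraph" where
  "quotient_trigraph G \<P> =
     \<lparr> verts = \<P>,
       black = pair_edges \<P> (black_complete G),
       red = pair_edges \<P> (mixed G) \<rparr>"

definition merge_parts :: "'a set set \<Rightarrow> 'a set \<Rightarrow> 'a set \<Rightarrow> 'a set set" where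
  "merge_parts \<P> P Q = insert (P \<union> Q) (\<P> - {P, Q})"

lemma black_complete_sym: "black_complete G P Q \<Longrightarrow> black_complete G Q P"
  unfolding black_complete_def by (metis insert_commute)

lemma anticomplete_sym: "anticomplete G P Q \<Longrightarrow> anticomplete G Q P"
  unfolding anticomplete_def adjacent_def by (metis insert_commute)

lemma mixed_sym: "mixed G P Q \<Longrightarrow> mixed G Q P"
  unfolding mixed_def using black_complete_sym anticomplete_sym by blast

lemma black_complete_Un_left:
  "black_complete G (P \<union> Q) Z \<longleftrightarrow> black_complete G P Z \<and> black_complete G Q Z"
  unfolding black_complete_def by blast

lemma anticomplete_Un_left:
  "anticomplete G (P \<union> Q) Z \<longleftrightarrow> anticomplete G P Z \<and> anticomplete G Q Z"
  unfolding anticomplete_def by blast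

lemma black_complete_imp_not_anticomplete:
  "P \<noteq> {} \<Longrightarrow> Q \<noteq> {} \<Longrightarrow> black_complete G P Q \<Longrightarrow> \<not> anticomplete G P Q"
  unfolding black_complete_def anticomplete_def adjacent_def by blast

lemma doubleton_in_pair_edges:
  assumes "\<And>p q. R p q \<Longrightarrow> R q p" and "p \<in> A" and "q \<in> A"
  shows "{p, q} \<in> pair_edges A R \<longleftrightarrow> p \<noteq> q \<and> R p q"
  using assms unfolding pair_edges_def by (auto simp: doubleton_eq_iff)

lemma pair_edges_merge:
  assumes sym: "\<And>p q. R p q \<Longrightarrow> R q p" and new: "M \<notin> A - {P, Q}"
  shows "pair_edges (insert M (A - {P, Q})) R =
           {e \<in> pair_edges A R. P \<notin> e \<and> Q \<notin> e} \<union> {{M, z} | z. z \<in> A - {P, Q} \<and> R M z}"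
proof (intro equalityI subsetI)
  fix e assume "e \<in> pair_edges (insert M (A - {P, Q})) R"
  then obtain p q where e: "e = {p, q}" "p \<in> insert M (A - {P, Q})" "q \<in> insert M (A - {P, Q})"
    "p \<noteq> q" "R p q"
    unfolding pair_edges_def by blast
  consider "p = M" | "q = M" | "p \<in> A - {P, Q}" "q \<in> A - {P, Q}"
    using e(2,3) by blast
  then show "e \<in> {e \<in> pair_edges A R. P \<notin> e \<and> Q \<notin> e} \<union> {{M, z} | z. z \<in> A - {P, Q} \<and> R M z}"
  proof cases
    case 1
    then show ?thesis using e by blast
  next
    case 2
    then have "e = {M, p}" "R M p" using e sym by (auto simp: insert_commute)
    then show ?thesis using e 2 by blast
  next
    case 3
    then show ?thesis using e unfolding pair_edges_def by blast
  qed
next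
  fix e assume "e \<in> {e \<in> pair_edges A R. P \<notin> e \<and> Q \<notin> e} \<union> {{M, z} | z. z \<in> A - {P, Q} \<and> R M z}"
  then show "e \<in> pair_edges (insert M (A - {P, Q})) R"
    using new unfolding pair_edges_def by blast
qed

lemma partition_on_merge_parts:
  assumes part: "partition_on V \<P>" and P: "P \<in> \<P>" and Q: "Q \<in> \<P>"
  shows "partition_on V (merge_parts \<P> P Q)"
proof (rule partition_onI)
  show "\<Union> (merge_parts \<P> P Q) = V"
    using partition_onD1[OF part] P Q unfolding merge_parts_def by auto
  show "{} \<notin> merge_parts \<P> P Q"
    using partition_onD3[OF part] P unfolding merge_parts_def by auto
  fix A B assume "A \<in> merge_parts \<P> P Q" "B \<in> merge_parts \<P> P Q" "A \<noteq> B"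
  moreover have "\<And>C D. C \<in> \<P> \<Longrightarrow> D \<in> \<P> \<Longrightarrow> C \<noteq> D \<Longrightarrow> C \<inter> D = {}"
    using disjointD[OF partition_onD2[OF part]] by blast
  ultimately show "disjnt A B"
    using P Q unfolding merge_parts_def disjnt_def by blast
qed

lemma merged_part_new:
  assumes "partition_on V \<P>" "P \<in> \<P>" "Q \<in> \<P>"
  shows "P \<union> Q \<notin> \<P> - {P, Q}"
proof
  assume "P \<union> Q \<in> \<P> - {P, Q}"
  moreover have "P \<noteq> {}" using partition_onD3[OF assms(1)] assms(2) by blast
  ultimately show False
    using disjointD[OF partition_onD2[OF assms(1)], of "P \<union> Q" P] assms(2) by blast
qed

lemma quotient_trigraph_simps:
  "verts (quotient_trigraph G \<P>) = \<P>"
  "black (quotient_trigraph G \<P>) = pair_edges \<P> (black_complete G)"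
  "red (quotient_trigraph G \<P>) = pair_edges \<P> (mixed G)"
  by (simp_all add: quotient_trigraph_def)

lemma quotient_trigraph_black_iff:
  assumes "P \<in> \<P>" "Q \<in> \<P>" "P \<noteq> Q"
  shows "{P, Q} \<in> black (quotient_trigraph G \<P>) \<longleftrightarrow> black_complete G P Q"
  unfolding quotient_trigraph_simps
  using doubleton_in_pair_edges[of "black_complete G", OF black_complete_sym assms(1,2)] assms(3)
  by blast

lemma quotient_trigraph_red_iff:
  assumes "P \<in> \<P>" "Q \<in> \<P>" "P \<noteq> Q"
  shows "{P, Q} \<in> red (quotient_trigraph G \<P>) \<longleftrightarrow> mixed G P Q"
  unfolding quotient_trigraph_simps
  using doubleton_in_pair_edges[of "mixed G", OF mixed_sym assms(1,2)] assms(3)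
  by blast

lemma quotient_trigraph_adjacent_iff:
  assumes "{} \<notin> \<P>" "P \<in> \<P>" "Q \<in> \<P>" "P \<noteq> Q"
  shows "adjacent (quotient_trigraph G \<P>) P Q \<longleftrightarrow> \<not> anticomplete G P Q"
proof -
  have "P \<noteq> {}" "Q \<noteq> {}" using assms(1-3) by auto
  then have "black_complete G P Q \<Longrightarrow> \<not> anticomplete G P Q"
    by (rule black_complete_imp_not_anticomplete)
  then show ?thesis
    unfolding adjacent_def quotient_trigraph_black_iff[OF assms(2-4)]
      quotient_trigraph_red_iff[OF assms(2-4)] mixed_def
    by blast
qed

lemma contract_quotient_trigraph:
  assumes part: "partition_on V \<P>" and P: "P \<in> \<P>" and Q: "Q \<in> \<P>"
  shows "contract (quotient_trigraph G \<P>) P Q (P \<union> Q) = quotient_trigraph G (merge_parts \<P> P Q)"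
proof -
  let ?T = "quotient_trigraph G \<P>"
  have ne: "{} \<notin> \<P>" using partition_onD3[OF part] .
  have black_merged: "{P, z} \<in> black ?T \<and> {Q, z} \<in> black ?T \<longleftrightarrow> black_complete G (P \<union> Q) z"
    if "z \<in> \<P> - {P, Q}" for z
    using that quotient_trigraph_black_iff[OF P, of z] quotient_trigraph_black_iff[OF Q, of z]
    unfolding black_complete_Un_left by blast
  have mixed_merged: "\<not> ({P, z} \<in> black ?T \<and> {Q, z} \<in> black ?T)
      \<and> \<not> (\<not> adjacent ?T P z \<and> \<not> adjacent ?T Q z) \<longleftrightarrow> mixed G (P \<union> Q) z"
    if "z \<in> \<P> - {P, Q}" for z
    using that black_merged[OF that]
      quotient_trigraph_adjacent_iff[OF ne P, of z] quotient_trigraph_adjacent_iff[OF ne Q, of z]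
    unfolding mixed_def anticomplete_Un_left by blast
  have new: "P \<union> Q \<notin> \<P> - {P, Q}" by (rule merged_part_new[OF part P Q])
  have "{e \<in> black ?T. P \<notin> e \<and> Q \<notin> e}
      \<union> {{P \<union> Q, z} |z. z \<in> verts ?T - {P, Q} \<and> {P, z} \<in> black ?T \<and> {Q, z} \<in> black ?T}
    = {e \<in> black ?T. P \<notin> e \<and> Q \<notin> e}
      \<union> {{P \<union> Q, z} |z. z \<in> \<P> - {P, Q} \<and> black_complete G (P \<union> Q) z}"
    using black_merged unfolding quotient_trigraph_simps(1) by blast
  also have "\<dots> = pair_edges (merge_parts \<P> P Q) (black_complete G)"
    unfolding merge_parts_def quotient_trigraph_simps(2)
    by (rule pair_edges_merge[of "black_complete G", OF black_complete_sym new, symmetric])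
  finally have black_eq: "{e \<in> black ?T. P \<notin> e \<and> Q \<notin> e}
      \<union> {{P \<union> Q, z} |z. z \<in> verts ?T - {P, Q} \<and> {P, z} \<in> black ?T \<and> {Q, z} \<in> black ?T}
    = pair_edges (merge_parts \<P> P Q) (black_complete G)" .
  have "{e \<in> red ?T. P \<notin> e \<and> Q \<notin> e}
      \<union> {{P \<union> Q, z} |z. z \<in> verts ?T - {P, Q} \<and> \<not> ({P, z} \<in> black ?T \<and> {Q, z} \<in> black ?T)
                            \<and> \<not> (\<not> adjacent ?T P z \<and> \<not> adjacent ?T Q z)}
    = {e \<in> red ?T. P \<notin> e \<and> Q \<notin> e}
      \<union> {{P \<union> Q, z} |z. z \<in> \<P> - {P, Q} \<and> mixed G (P \<union> Q) z}"
    using mixed_merged unfolding quotient_trigraph_simps(1) by blast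
  also have "\<dots> = pair_edges (merge_parts \<P> P Q) (mixed G)"
    unfolding merge_parts_def quotient_trigraph_simps(3)
    by (rule pair_edges_merge[of "mixed G", OF mixed_sym new, symmetric])
  finally have red_eq: "{e \<in> red ?T. P \<notin> e \<and> Q \<notin> e}
      \<union> {{P \<union> Q, z} |z. z \<in> verts ?T - {P, Q} \<and> \<not> ({P, z} \<in> black ?T \<and> {Q, z} \<in> black ?T)
                            \<and> \<not> (\<not> adjacent ?T P z \<and> \<not> adjacent ?T Q z)}
    = pair_edges (merge_parts \<P> P Q) (mixed G)" .
  show ?thesis
    unfolding contract_def black_eq red_eq
    unfolding quotient_trigraph_def merge_parts_def quotient_trigraph_simps(1)
    by simp
qed

lemma pair_edges_singletons:
  "pair_edges ((\<lambda>p. {p}) ` V) R = {{{p}, {q}} | p q. p \<in> V \<and> q \<in> V \<and> p \<noteq> q \<and> R {p} {q}}"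
  unfolding pair_edges_def by blast

lemma lift_eq_quotient_trigraph:
  assumes "wf_trigraph G"
  shows "lift G = quotient_trigraph G ((\<lambda>p. {p}) ` verts G)"
proof -
  have edge: "p \<in> verts G \<and> q \<in> verts G \<and> p \<noteq> q" if "{p, q} \<in> black G \<or> {p, q} \<in> red G" for p q
    using assms that unfolding wf_trigraph_def by (auto simp: doubleton_eq_iff)
  have black_iff: "black_complete G {p} {q} \<longleftrightarrow> {p, q} \<in> black G" for p q
    unfolding black_complete_def by blast
  have red_iff: "mixed G {p} {q} \<longleftrightarrow> {p, q} \<in> red G" for p q
    using assms unfolding wf_trigraph_def mixed_def black_complete_def anticomplete_def adjacent_def
    by blast
  have "black (lift G) = pair_edges ((\<lambda>p. {p}) ` verts G) (black_complete G)"
    unfolding pair_edges_singletons black_iff lift_def trigraph.select_convs using edge by blast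
  moreover have "red (lift G) = pair_edges ((\<lambda>p. {p}) ` verts G) (mixed G)"
    unfolding pair_edges_singletons red_iff lift_def trigraph.select_convs using edge by blast
  ultimately show ?thesis by (simp add: lift_def quotient_trigraph_def)
qed

lemma length_trig_seq: "length (trig_seq T cs) = Suc (length cs)"
  by (induction T cs rule: trig_seq.induct) simp_all

lemma trig_seq_nth_0: "trig_seq T cs ! 0 = T"
  by (cases cs) auto

lemma trig_seq_nth_Suc:
  "t < length cs \<Longrightarrow>
     trig_seq T cs ! Suc t = contract (trig_seq T cs ! t) (fst (cs ! t)) (snd (cs ! t)) (fst (cs ! t) \<union> snd (cs ! t))"
proof (induction T cs arbitrary: t rule: trig_seq.induct)
  case (2 T u v cs)
  then show ?case by (cases t) (simp_all add: trig_seq_nth_0)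
qed simp

lemma seq_trigraphs_quotient:
  assumes wf: "wf_trigraph G" and seq: "partial_d_sequence G d cs" and t: "t \<le> length cs"
  shows "partition_on (verts G) (verts (seq_trigraphs G cs ! t))
         \<and> seq_trigraphs G cs ! t = quotient_trigraph G (verts (seq_trigraphs G cs ! t))"
  using t
proof (induction t)
  case 0
  show ?case
    using lift_eq_quotient_trigraph[OF wf] partition_on_singletons[of "verts G"]
    by (simp add: seq_trigraphs_def trig_seq_nth_0 quotient_trigraph_simps)
next
  case (Suc t)
  let ?T = "seq_trigraphs G cs ! t" and ?P = "fst (cs ! t)" and ?Q = "snd (cs ! t)"
  have t: "t < length cs" using Suc.prems by simp
  have part: "partition_on (verts G) (verts ?T)" and quot: "?T = quotient_trigraph G (verts ?T)"
    using Suc.IH t by auto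
  have step: "?P \<in> verts ?T" "?Q \<in> verts ?T"
    using seq t unfolding partial_d_sequence_def by auto
  have "seq_trigraphs G cs ! Suc t = contract ?T ?P ?Q (?P \<union> ?Q)"
    unfolding seq_trigraphs_def using t by (rule trig_seq_nth_Suc)
  also have "\<dots> = quotient_trigraph G (merge_parts (verts ?T) ?P ?Q)"
    using contract_quotient_trigraph[OF part step(1,2)] quot by metis
  finally show ?case
    using partition_on_merge_parts[OF part step(1,2)] by (simp add: quotient_trigraph_simps)
qed

lemma verts_seq_trigraphs_Suc:
  assumes "t < length cs"
  shows "verts (seq_trigraphs G cs ! Suc t)
           = merge_parts (verts (seq_trigraphs G cs ! t)) (fst (cs ! t)) (snd (cs ! t))"
  unfolding seq_trigraphs_def trig_seq_nth_Suc[OF assms] contract_def merge_parts_def by simp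

lemma seq_trigraphs_max_red_deg:
  assumes "partial_d_sequence G d cs" and "t \<le> length cs"
  shows "max_red_deg_le (seq_trigraphs G cs ! t) d"
proof -
  have "seq_trigraphs G cs ! t \<in> set (seq_trigraphs G cs)"
    using assms(2) length_trig_seq[of "lift G" cs] unfolding seq_trigraphs_def by simp
  then show ?thesis using assms(1) unfolding partial_d_sequence_def by blast
qed

definition scattered :: "'a set set \<Rightarrow> 'a set \<Rightarrow> bool" where
  "scattered \<P> V \<longleftrightarrow> (\<forall>P\<in>\<P>. \<forall>u\<in>V. \<forall>v\<in>V. u \<in> P \<longrightarrow> v \<in> P \<longrightarrow> u = v)"

lemma scattered_subset: "scattered \<P> V \<Longrightarrow> W \<subseteq> V \<Longrightarrow> scattered \<P> W"
  unfolding scattered_def by blast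

lemma scattered_singletons: "scattered ((\<lambda>p. {p}) ` A) V"
  unfolding scattered_def by blast

lemma scattered_merge_parts:
  assumes "scattered \<P> V" and "P \<in> \<P>" and "Q \<in> \<P>"
    and "\<And>u v. u \<in> V \<Longrightarrow> v \<in> V \<Longrightarrow> u \<in> P \<Longrightarrow> v \<in> Q \<Longrightarrow> u = v"
  shows "scattered (merge_parts \<P> P Q) V"
  using assms unfolding scattered_def merge_parts_def by (metis Diff_iff UnE insertE)

lemma mixed_mono: "mixed G P Q \<Longrightarrow> P \<subseteq> P' \<Longrightarrow> Q \<subseteq> Q' \<Longrightarrow> mixed G P' Q'"
  unfolding mixed_def black_complete_def anticomplete_def by blast

lemma mixed_if_red:
  assumes "wf_trigraph G" "u \<in> P" "{u, z} \<in> red G"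
  shows "mixed G P {z}"
  using assms unfolding wf_trigraph_def mixed_def black_complete_def anticomplete_def adjacent_def
  by blast

lemma mixed_if_black_nonadjacent:
  assumes "u \<in> P" "v \<in> P" "{u, z} \<in> black G" "\<not> adjacent G v z"
  shows "mixed G P {z}"
  using assms unfolding mixed_def black_complete_def anticomplete_def adjacent_def by blast

lemma card_le_red_deg_quotient_trigraph:
  assumes fin: "finite V" and part: "partition_on V \<P>" and M: "M \<in> \<P>"
    and W: "W \<subseteq> V - M" and mixed: "\<And>w. w \<in> W \<Longrightarrow> mixed G M {w}" and sc: "scattered \<P> W"
  shows "card W \<le> red_deg (quotient_trigraph G \<P>) M"
proof -
  have "\<forall>w\<in>W. \<exists>P\<in>\<P>. w \<in> P" using W partition_onD1[OF part] by blast
  then obtain f where f: "\<And>w. w \<in> W \<Longrightarrow> f w \<in> \<P> \<and> w \<in> f w" by metis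
  have "inj_on f W"
    using f sc unfolding scattered_def inj_on_def by metis
  moreover have "f ` W \<subseteq> {P \<in> \<P>. {M, P} \<in> red (quotient_trigraph G \<P>)}"
  proof safe
    fix w assume w: "w \<in> W"
    then have "M \<noteq> f w" using f W by blast
    moreover have "mixed G M (f w)" using mixed_mono[OF mixed[OF w]] f[OF w] by blast
    ultimately show "{M, f w} \<in> red (quotient_trigraph G \<P>)"
      using quotient_trigraph_red_iff[OF M] f[OF w] by blast
  qed (use f in blast)
  moreover have "finite \<P>" using finite_elements[OF fin part] .
  ultimately have "card W \<le> card {P \<in> \<P>. {M, P} \<in> red (quotient_trigraph G \<P>)}"
    by (simp add: card_inj_on_le)
  then show ?thesis unfolding red_deg_def quotient_trigraph_simps(1) .
qed

lemma arc_red_deg: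
  assumes fin: "finite V" and part: "partition_on V \<P>" and R: "R \<in> \<P>" "x' \<in> R" "y' \<in> R"
    and U: "U \<subseteq> V" and sc: "scattered \<P> U" and arc: "arc G U x' y'"
  shows "card U - 1 \<le> red_deg (quotient_trigraph G \<P>) R"
proof -
  have finU: "finite U" using finite_subset[OF U fin] .
  have "card (U \<inter> R) \<le> Suc 0"
    using sc R(1) finU unfolding scattered_def by (subst card_le_Suc0_iff_eq) auto
  then have "card U - 1 \<le> card (U - R)"
    using card_Diff_subset_Int[of U R] finU by simp
  also have "card (U - R) \<le> red_deg (quotient_trigraph G \<P>) R"
  proof (rule card_le_red_deg_quotient_trigraph[OF fin part R(1)])
    show "U - R \<subseteq> V - R" using U by blast
    show "scattered \<P> (U - R)" using scattered_subset[OF sc] by blast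
    fix w assume "w \<in> U - R"
    then have "{x', w} \<in> black G" "\<not> adjacent G y' w" using arc unfolding arc_def by auto
    then show "mixed G R {w}" by (rule mixed_if_black_nonadjacent[OF R(2,3)])
  qed
  finally show ?thesis .
qed

text \<open>Indices 0, 1, 2..7, 8..13 enumerate the vertices s, t, a 1..a 6, b 1..b 6 of a vertical set.\<close>

definition vertical_vertex :: "'v \<Rightarrow> 'v \<Rightarrow> (nat \<Rightarrow> 'v) \<Rightarrow> (nat \<Rightarrow> 'v) \<Rightarrow> nat \<Rightarrow> 'v" where
  "vertical_vertex s t a b n =
     (if n = 0 then s else if n = 1 then t else if n \<le> 7 then a (n - 1) else b (n - 7))"

lemma atLeastAtMost_1_5: "{1..5::nat} = {1, 2, 3, 4, 5}"
  by (auto simp: atLeastLessThanSuc_atLeastAtMost[symmetric] upt_rec_numeral)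

lemma atLeastAtMost_1_6: "{1..6::nat} = {1, 2, 3, 4, 5, 6}"
  by (auto simp: atLeastLessThanSuc_atLeastAtMost[symmetric] upt_rec_numeral)

lemma vertical_vertex_cases:
  assumes "n < 14"
  shows "(n = 0 \<and> vertical_vertex s t a b n = s) \<or> (n = 1 \<and> vertical_vertex s t a b n = t)
    \<or> (2 \<le> n \<and> n \<le> 7 \<and> n - 1 \<in> {1..6} \<and> vertical_vertex s t a b n = a (n - 1))
    \<or> (8 \<le> n \<and> n - 7 \<in> {1..6} \<and> vertical_vertex s t a b n = b (n - 7))"
  using assms by (auto simp: vertical_vertex_def)

lemma vset_eq_image: "vset s t a b = vertical_vertex s t a b ` {0..<14}"
proof
  show "vset s t a b \<subseteq> vertical_vertex s t a b ` {0..<14}"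
  proof
    fix z assume "z \<in> vset s t a b"
    then consider "z = s" | "z = t" | i where "i \<in> {1..6}" "z = a i" | i where "i \<in> {1..6}" "z = b i"
      unfolding vset_def fence_V_def fence_A_def fence_B_def by blast
    then show "z \<in> vertical_vertex s t a b ` {0..<14}"
    proof cases
      case 1
      then show ?thesis by (intro rev_image_eqI[of 0]) (auto simp: vertical_vertex_def)
    next
      case 2
      then show ?thesis by (intro rev_image_eqI[of 1]) (auto simp: vertical_vertex_def)
    next
      case (3 i)
      then show ?thesis by (intro rev_image_eqI[of "i + 1"]) (auto simp: vertical_vertex_def)
    next
      case (4 i)
      then show ?thesis by (intro rev_image_eqI[of "i + 7"]) (auto simp: vertical_vertex_def)
    qed
  qed
  show "vertical_vertex s t a b ` {0..<14} \<subseteq> vset s t a b"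
  proof (rule image_subsetI)
    fix n :: nat assume "n \<in> {0..<14}"
    then have "n < 14" by simp
    from vertical_vertex_cases[OF this, of s t a b] show "vertical_vertex s t a b n \<in> vset s t a b"
      unfolding vset_def fence_V_def fence_A_def fence_B_def by blast
  qed
qed

lemma inj_on_vertical_vertex:
  assumes a: "inj_on a {1..6}" and b: "inj_on b {1..6}" and ab: "a ` {1..6} \<inter> b ` {1..6} = {}"
    and s: "s \<notin> a ` {1..6} \<union> b ` {1..6}" and t: "t \<notin> a ` {1..6} \<union> b ` {1..6}" and st: "s \<noteq> t"
  shows "inj_on (vertical_vertex s t a b) {0..<14}"
proof (rule inj_onI)
  fix i j assume "i \<in> {0..<14}" "j \<in> {0..<14}" and eq: "vertical_vertex s t a b i = vertical_vertex s t a b j"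
  then have "i < 14" "j < 14" by auto
  have a_eq: "k = l" if "k \<in> {1..6}" "l \<in> {1..6}" "a k = a l" for k l using a that by (meson inj_onD)
  have b_eq: "k = l" if "k \<in> {1..6}" "l \<in> {1..6}" "b k = b l" for k l using b that by (meson inj_onD)
  have ab_ne: "a k \<noteq> b l" if "k \<in> {1..6}" "l \<in> {1..6}" for k l using ab that by blast
  show "i = j"
    using vertical_vertex_cases[OF \<open>i < 14\<close>, of s t a b] vertical_vertex_cases[OF \<open>j < 14\<close>, of s t a b]
      eq ab_ne[of "i - 1" "j - 7"] ab_ne[of "j - 1" "i - 7"]
    by (elim disjE conjE) (use a_eq[of "i - 1" "j - 1"] b_eq[of "i - 7" "j - 7"] s t st in auto)
qed

definition fence_black_pairs :: "(nat \<times> nat) list" where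
  "fence_black_pairs = [(2,3),(3,4),(4,5),(5,6),(6,7),(7,2),(8,9),(9,10),(10,11),(11,12),(12,13),(13,8),(8,7)]"

definition fence_red_pairs :: "(nat \<times> nat) list" where
  "fence_red_pairs = [(2,8),(3,9),(4,10),(5,11),(6,12),(7,13),(2,9),(3,10),(4,11),(5,12),(6,13)]"

lemma fence_black_pairs_range: "\<forall>(k, l) \<in> set fence_black_pairs. k \<in> {0..<14} \<and> l \<in> {0..<14}"
  by (simp add: fence_black_pairs_def)

lemma fence_red_pairs_range: "\<forall>(k, l) \<in> set fence_red_pairs. k \<in> {0..<14} \<and> l \<in> {0..<14}"
  by (simp add: fence_red_pairs_def)

lemma Collect_1_5: "{f i | i. i \<in> {1..5::nat}} = {f 1, f 2, f 3, f 4, f 5}"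
  unfolding atLeastAtMost_1_5 by blast

lemma Collect_1_6: "{f i | i. i \<in> {1..6::nat}} = {f 1, f 2, f 3, f 4, f 5, f 6}"
  unfolding atLeastAtMost_1_6 by blast

lemma fence_black_eq_image:
  "fence_black a b = (\<lambda>(k, l). {vertical_vertex s t a b k, vertical_vertex s t a b l}) ` set fence_black_pairs"
  unfolding fence_black_def fence_black_pairs_def Collect_1_5 one_add_one
  by (simp add: vertical_vertex_def insert_commute)

lemma fence_red_eq_image:
  "fence_red a b = (\<lambda>(k, l). {vertical_vertex s t a b k, vertical_vertex s t a b l}) ` set fence_red_pairs"
  unfolding fence_red_def fence_red_pairs_def Collect_1_5 Collect_1_6 one_add_one
  by (simp add: vertical_vertex_def insert_commute)

lemma doubleton_in_pair_image_iff:
  assumes inj: "inj_on f A" and L: "\<forall>(k, l) \<in> set L. k \<in> A \<and> l \<in> A" and "i \<in> A" "j \<in> A"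
  shows "{f i, f j} \<in> (\<lambda>(k, l). {f k, f l}) ` set L \<longleftrightarrow> (i, j) \<in> set L \<or> (j, i) \<in> set L"
proof
  assume "{f i, f j} \<in> (\<lambda>(k, l). {f k, f l}) ` set L"
  then obtain k l where kl: "(k, l) \<in> set L" "{f i, f j} = {f k, f l}" by auto
  then have "(i = k \<and> j = l) \<or> (i = l \<and> j = k)"
    using L assms(3,4) inj_on_eq_iff[OF inj] unfolding doubleton_eq_iff by fastforce
  then show "(i, j) \<in> set L \<or> (j, i) \<in> set L" using kl(1) by blast
next
  assume "(i, j) \<in> set L \<or> (j, i) \<in> set L"
  then show "{f i, f j} \<in> (\<lambda>(k, l). {f k, f l}) ` set L"
    by (auto simp: insert_commute intro: rev_image_eqI)
qed

text \<open>
  The hypotheses say nothing about the pair s, t itself, so pairs of indices below 2 are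
  never classified.
\<close>

definition black_index :: "nat \<Rightarrow> nat \<Rightarrow> bool" where
  "black_index i j \<longleftrightarrow> (i, j) \<in> set fence_black_pairs \<or> (j, i) \<in> set fence_black_pairs
     \<or> (i \<le> 1 \<and> 2 \<le> j \<and> j \<le> 7) \<or> (j \<le> 1 \<and> 2 \<le> i \<and> i \<le> 7)"

definition red_index :: "nat \<Rightarrow> nat \<Rightarrow> bool" where
  "red_index i j \<longleftrightarrow> (i, j) \<in> set fence_red_pairs \<or> (j, i) \<in> set fence_red_pairs"

definition nonadjacent_index :: "nat \<Rightarrow> nat \<Rightarrow> bool" where
  "nonadjacent_index i j \<longleftrightarrow> i \<noteq> j \<and> \<not> (i \<le> 1 \<and> j \<le> 1) \<and> \<not> black_index i j \<and> \<not> red_index i j"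

definition mixed_index :: "nat \<Rightarrow> nat \<Rightarrow> nat \<Rightarrow> bool" where
  "mixed_index i j w \<longleftrightarrow> red_index i w \<or> red_index j w
     \<or> (black_index i w \<and> nonadjacent_index j w) \<or> (nonadjacent_index i w \<and> black_index j w)"

lemma mixed_index_commute: "mixed_index i j w \<longleftrightarrow> mixed_index j i w"
  unfolding mixed_index_def by blast

lemma five_mixed_indices:
  assumes "i < 14" "j < 14" "i \<noteq> j" "\<not> (i \<le> 1 \<and> j \<le> 1)"
  shows "5 \<le> card {w. w < 14 \<and> w \<noteq> i \<and> w \<noteq> j \<and> mixed_index i j w}"
proof -
  let ?ws = "\<lambda>i j. filter (\<lambda>w. w \<noteq> i \<and> w \<noteq> j \<and> mixed_index i j w) [0..<14]"
  have "list_all (\<lambda>i. list_all (\<lambda>j. 5 \<le> length (?ws i j)) [0..<i]) [2..<14]"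
    by code_simp
  then have less: "5 \<le> length (?ws i j)" if "j < i" "2 \<le> i" "i < 14" for i j
    using that unfolding list_all_iff set_upt Ball_def atLeastLessThan_iff by blast
  have "5 \<le> length (?ws i j)"
  proof (cases "j < i")
    case True
    then have "2 \<le> i" using assms(4) by linarith
    then show ?thesis using less[OF True _ assms(1)] by blast
  next
    case False
    then have "i < j" "2 \<le> j" using assms(3,4) by linarith+
    moreover have "?ws i j = ?ws j i"
      by (intro filter_cong refl) (use mixed_index_commute in blast)
    ultimately show ?thesis using less[of i j] assms(2) by simp
  qed
  also have "length (?ws i j) = card (set (?ws i j))"
    by (rule distinct_card[symmetric]) (intro distinct_filter distinct_upt)
  also have "set (?ws i j) = {w. w < 14 \<and> w \<noteq> i \<and> w \<noteq> j \<and> mixed_index i j w}"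
    unfolding set_filter set_upt by auto
  finally show ?thesis .
qed

locale vertical_gadget =
  fixes G :: "'v trigraph" and s t :: 'v and a b :: "nat \<Rightarrow> 'v"
  assumes wf: "wf_trigraph G" and vertical: "vertical_set G s t a b"
begin

abbreviation vtx :: "nat \<Rightarrow> 'v" where "vtx \<equiv> vertical_vertex s t a b"

lemma fence_gadget: "fence_in G a b" and attached_pair: "attached G a b {s, t}"
  using vertical unfolding vertical_set_def attached_def by auto

lemma inj_on_vtx: "inj_on vtx {0..<14}"
  using vertical unfolding vertical_set_def attached_def fence_in_def fence_V_def fence_A_def fence_B_def
  by (intro inj_on_vertical_vertex) auto

lemma card_vset: "card (vset s t a b) = 14"
  unfolding vset_eq_image card_image[OF inj_on_vtx] by simp

lemma vset_subset: "vset s t a b \<subseteq> verts G"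
  using attached_pair unfolding attached_def fence_in_def vset_def by blast

lemma black_index_black:
  assumes "i < 14" "j < 14" "black_index i j"
  shows "{vtx i, vtx j} \<in> black G"
proof -
  consider "(i, j) \<in> set fence_black_pairs \<or> (j, i) \<in> set fence_black_pairs"
    | "(i \<le> 1 \<and> 2 \<le> j \<and> j \<le> 7) \<or> (j \<le> 1 \<and> 2 \<le> i \<and> i \<le> 7)"
    using assms(3) unfolding black_index_def by blast
  then show ?thesis
  proof cases
    case 1
    then have "{vtx i, vtx j} \<in> fence_black a b"
      unfolding fence_black_eq_image[of a b s t]
      using doubleton_in_pair_image_iff[OF inj_on_vtx fence_black_pairs_range] assms(1,2) by simp
    then show ?thesis using fence_gadget unfolding fence_in_def by blast
  next
    case 2
    then show ?thesis
      using attached_pair vertical_vertex_cases[OF assms(1), of s t a b] vertical_vertex_cases[OF assms(2), of s t a b]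
      unfolding attached_def fence_A_def by (auto simp: insert_commute)
  qed
qed

lemma red_index_red:
  assumes "i < 14" "j < 14" "red_index i j"
  shows "{vtx i, vtx j} \<in> red G"
proof -
  have "{vtx i, vtx j} \<in> fence_red a b"
    unfolding fence_red_eq_image[of a b s t]
    using doubleton_in_pair_image_iff[OF inj_on_vtx fence_red_pairs_range] assms unfolding red_index_def by simp
  then show ?thesis using fence_gadget unfolding fence_in_def by blast
qed

lemma nonadjacent_index_nonadjacent:
  assumes "i < 14" "j < 14" "nonadjacent_index i j"
  shows "\<not> adjacent G (vtx i) (vtx j)"
proof (cases "2 \<le> i \<and> 2 \<le> j")
  case True
  have "{vtx i, vtx j} \<subseteq> fence_V a b"
    using True vertical_vertex_cases[OF assms(1), of s t a b] vertical_vertex_cases[OF assms(2), of s t a b]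
    unfolding fence_V_def fence_A_def fence_B_def by auto
  moreover have "{vtx i, vtx j} \<notin> fence_black a b" "{vtx i, vtx j} \<notin> fence_red a b"
    unfolding fence_black_eq_image[of a b s t] fence_red_eq_image[of a b s t]
    using doubleton_in_pair_image_iff[OF inj_on_vtx fence_black_pairs_range]
      doubleton_in_pair_image_iff[OF inj_on_vtx fence_red_pairs_range] assms unfolding nonadjacent_index_def black_index_def red_index_def by simp_all
  ultimately show ?thesis
    using fence_gadget unfolding fence_in_def adjacent_def by blast
next
  case False
  then have "(i \<le> 1 \<and> 8 \<le> j) \<or> (j \<le> 1 \<and> 8 \<le> i)"
    using assms(3) unfolding nonadjacent_index_def black_index_def by auto
  then show ?thesis
    using attached_pair vertical_vertex_cases[OF assms(1), of s t a b] vertical_vertex_cases[OF assms(2), of s t a b]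
    unfolding attached_def fence_B_def adjacent_def by (auto simp: insert_commute)
qed

lemma mixed_index_mixed:
  assumes i: "i < 14" and j: "j < 14" and w: "w < 14" and "mixed_index i j w"
  shows "mixed G {vtx i, vtx j} {vtx w}"
proof -
  consider "red_index i w" | "red_index j w"
    | "black_index i w" "nonadjacent_index j w" | "nonadjacent_index i w" "black_index j w"
    using assms(4) unfolding mixed_index_def by blast
  then show ?thesis
  proof cases
    case 1
    then show ?thesis using mixed_if_red[OF wf _ red_index_red[OF i w]] by blast
  next
    case 2
    then show ?thesis using mixed_if_red[OF wf _ red_index_red[OF j w]] by blast
  next
    case 3
    then show ?thesis
      using mixed_if_black_nonadjacent[OF _ _ black_index_black[OF i w] nonadjacent_index_nonadjacent[OF j w]]
      by blast
  next
    case 4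
    then show ?thesis
      using mixed_if_black_nonadjacent[OF _ _ black_index_black[OF j w] nonadjacent_index_nonadjacent[OF i w]]
      by blast
  qed
qed

lemma vset_mixed_witnesses:
  assumes u: "u \<in> vset s t a b" and v: "v \<in> vset s t a b" and uv: "u \<noteq> v" and st: "{u, v} \<noteq> {s, t}"
  shows "\<exists>W \<subseteq> vset s t a b - {u, v}. 5 \<le> card W \<and> (\<forall>w\<in>W. mixed G {u, v} {w})"
proof -
  obtain i j where ij: "i < 14" "j < 14" "u = vtx i" "v = vtx j"
    using u v unfolding vset_eq_image by auto
  have "i \<noteq> j" using ij uv by blast
  moreover have "\<not> (i \<le> 1 \<and> j \<le> 1)"
  proof
    assume "i \<le> 1 \<and> j \<le> 1"
    with \<open>i \<noteq> j\<close> have "(i = 0 \<and> j = 1) \<or> (i = 1 \<and> j = 0)" by auto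
    then have "{u, v} = {s, t}" using ij by (auto simp: vertical_vertex_def)
    with st show False ..
  qed
  ultimately have card: "5 \<le> card {w. w < 14 \<and> w \<noteq> i \<and> w \<noteq> j \<and> mixed_index i j w}"
    (is "_ \<le> card ?I") using five_mixed_indices ij by blast
  have sub: "?I \<subseteq> {0..<14}" by auto
  show ?thesis
  proof (intro exI conjI ballI)
    show "vtx ` ?I \<subseteq> vset s t a b - {u, v}"
      using inj_on_vtx ij unfolding vset_eq_image by (auto simp: inj_on_eq_iff)
    show "5 \<le> card (vtx ` ?I)"
      using card card_image[OF inj_on_subset[OF inj_on_vtx sub]] by simp
    fix z assume "z \<in> vtx ` ?I"
    then obtain w where "w < 14" "mixed_index i j w" "z = vtx w" by blast
    then show "mixed G {u, v} {z}" using mixed_index_mixed ij by blast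
  qed
qed

lemma merged_pair_is_vertical_pair:
  assumes part: "partition_on (verts G) \<P>" and P: "P \<in> \<P>" and Q: "Q \<in> \<P>"
    and sc: "scattered \<P> (vset s t a b)"
    and deg: "max_red_deg_le (quotient_trigraph G (merge_parts \<P> P Q)) 4"
    and u: "u \<in> vset s t a b" "u \<in> P" and v: "v \<in> vset s t a b" "v \<in> Q" and uv: "u \<noteq> v"
  shows "{u, v} = {s, t}"
proof (rule ccontr)
  assume "{u, v} \<noteq> {s, t}"
  then obtain W where W: "W \<subseteq> vset s t a b - {u, v}" "5 \<le> card W" "\<forall>w\<in>W. mixed G {u, v} {w}"
    using vset_mixed_witnesses[OF u(1) v(1) uv] by blast
  have "vset s t a b \<inter> (P \<union> Q) \<subseteq> {u, v}"
    using sc P Q u v unfolding scattered_def by blast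
  then have disj: "W \<inter> (P \<union> Q) = {}" using W(1) by blast
  have "card W \<le> red_deg (quotient_trigraph G (merge_parts \<P> P Q)) (P \<union> Q)"
  proof (rule card_le_red_deg_quotient_trigraph)
    show "finite (verts G)" using wf unfolding wf_trigraph_def by blast
    show "partition_on (verts G) (merge_parts \<P> P Q)" by (rule partition_on_merge_parts[OF part P Q])
    show "P \<union> Q \<in> merge_parts \<P> P Q" by (simp add: merge_parts_def)
    show "W \<subseteq> verts G - (P \<union> Q)" using W(1) vset_subset disj by blast
    show "mixed G (P \<union> Q) {w}" if "w \<in> W" for w
      using mixed_mono[of G "{u, v}" "{w}"] W(3) that u v by blast
    have "scattered \<P> W" using scattered_subset[OF sc] W(1) by blast
    then show "scattered (merge_parts \<P> P Q) W"
      using scattered_merge_parts[OF _ P Q] disj by blast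
  qed
  moreover have "red_deg (quotient_trigraph G (merge_parts \<P> P Q)) (P \<union> Q) \<le> 4"
    using deg unfolding max_red_deg_le_def quotient_trigraph_simps merge_parts_def by blast
  ultimately show False using W(2) by simp
qed

lemma scattered_merge_unless_pair_split:
  assumes part: "partition_on (verts G) \<P>" and P: "P \<in> \<P>" and Q: "Q \<in> \<P>"
    and sc: "scattered \<P> (vset s t a b)"
    and deg: "max_red_deg_le (quotient_trigraph G (merge_parts \<P> P Q)) 4"
    and not_split: "\<not> involves (P, Q) s t"
  shows "scattered (merge_parts \<P> P Q) (vset s t a b)"
proof (rule scattered_merge_parts[OF sc P Q])
  fix u v assume uv: "u \<in> vset s t a b" "v \<in> vset s t a b" "u \<in> P" "v \<in> Q"
  show "u = v"
  proof (rule ccontr)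
    assume "u \<noteq> v"
    then have "{u, v} = {s, t}" using merged_pair_is_vertical_pair[OF part P Q sc deg] uv by blast
    then have "involves (P, Q) s t" using uv unfolding involves_def doubleton_eq_iff by auto
    with not_split show False ..
  qed
qed

lemma arc_head_pair_separated:
  assumes part: "partition_on (verts G) \<P>" and sc: "scattered \<P> (vset s t a b)"
    and deg: "max_red_deg_le (quotient_trigraph G \<P>) 4"
    and arc: "arc G (vset s t a b) x' y'" and R: "R \<in> \<P>" "x' \<in> R"
  shows "y' \<notin> R"
proof
  assume "y' \<in> R"
  have "finite (verts G)" using wf unfolding wf_trigraph_def by blast
  then have "card (vset s t a b) - 1 \<le> red_deg (quotient_trigraph G \<P>) R"
    using arc_red_deg[OF _ part R \<open>y' \<in> R\<close> vset_subset sc arc] by blast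
  moreover have "red_deg (quotient_trigraph G \<P>) R \<le> 4"
    using deg R(1) unfolding max_red_deg_le_def quotient_trigraph_simps by blast
  ultimately show False using card_vset by simp
qed

end

lemma involved_vertices_merged:
  assumes wf: "wf_trigraph G" and seq: "partial_d_sequence G d cs" and i: "i < length cs"
    and inv: "involves (cs ! i) p q"
  shows "p \<noteq> q \<and> (\<exists>R \<in> verts (seq_trigraphs G cs ! Suc i). p \<in> R \<and> q \<in> R)"
proof
  let ?\<P> = "verts (seq_trigraphs G cs ! i)" and ?P = "fst (cs ! i)" and ?Q = "snd (cs ! i)"
  have "partition_on (verts G) ?\<P>" using seq_trigraphs_quotient[OF wf seq] i by simp
  moreover have "?P \<in> ?\<P>" "?Q \<in> ?\<P>" "?P \<noteq> ?Q"
    using seq i unfolding partial_d_sequence_def by auto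
  ultimately have "?P \<inter> ?Q = {}" using disjointD[OF partition_onD2] by blast
  then show "p \<noteq> q" using inv unfolding involves_def by blast
  have "?P \<union> ?Q \<in> verts (seq_trigraphs G cs ! Suc i)"
    unfolding verts_seq_trigraphs_Suc[OF i] merge_parts_def by simp
  then show "\<exists>R \<in> verts (seq_trigraphs G cs ! Suc i). p \<in> R \<and> q \<in> R"
    using inv unfolding involves_def by blast
qed

lemma scattered_until_pair_contracted:
  assumes wf: "wf_trigraph G"
    and V: "vertical_set G x y a b" and V': "vertical_set G x' y' a' b'"
    and arc: "arc G (vset x y a b) x' y'"
    and seq: "partial_d_sequence G 4 cs"
  shows "t \<le> length cs \<Longrightarrow> \<forall>k<t. \<not> involves (cs ! k) x y \<Longrightarrow>
     scattered (verts (seq_trigraphs G cs ! t)) (vset x y a b)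
     \<and> scattered (verts (seq_trigraphs G cs ! t)) (vset x' y' a' b')"
proof (induction t)
  case 0
  then show ?case
    by (simp add: seq_trigraphs_def trig_seq_nth_0 lift_def scattered_singletons)
next
  case (Suc t)
  let ?\<P> = "verts (seq_trigraphs G cs ! t)" and ?P = "fst (cs ! t)" and ?Q = "snd (cs ! t)"
  let ?\<P>' = "merge_parts ?\<P> ?P ?Q"
  have t: "t < length cs" using Suc.prems(1) by simp
  have sc: "scattered ?\<P> (vset x y a b)" and sc': "scattered ?\<P> (vset x' y' a' b')"
    using Suc t by auto
  have part: "partition_on (verts G) ?\<P>"
    using seq_trigraphs_quotient[OF wf seq] t by simp
  have P: "?P \<in> ?\<P>" and Q: "?Q \<in> ?\<P>" using seq t unfolding partial_d_sequence_def by auto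
  have verts_Suc: "verts (seq_trigraphs G cs ! Suc t) = ?\<P>'" by (rule verts_seq_trigraphs_Suc[OF t])
  have part': "partition_on (verts G) ?\<P>'" by (rule partition_on_merge_parts[OF part P Q])
  have deg: "max_red_deg_le (quotient_trigraph G ?\<P>') 4"
    using seq_trigraphs_max_red_deg[OF seq, of "Suc t"] seq_trigraphs_quotient[OF wf seq, of "Suc t"] t verts_Suc
    by simp
  interpret V: vertical_gadget G x y a b using wf V by unfold_locales
  interpret V': vertical_gadget G x' y' a' b' using wf V' by unfold_locales
  have "\<not> involves (?P, ?Q) x y" using Suc.prems(2) by (simp add: involves_def)
  then have sc_Suc: "scattered ?\<P>' (vset x y a b)"
    by (rule V.scattered_merge_unless_pair_split[OF part P Q sc deg])
  have "\<not> involves (?P, ?Q) x' y'"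
  proof
    assume "involves (?P, ?Q) x' y'"
    then have "x' \<in> ?P \<union> ?Q" "y' \<in> ?P \<union> ?Q" unfolding involves_def by auto
    moreover have "?P \<union> ?Q \<in> ?\<P>'" by (simp add: merge_parts_def)
    ultimately show False using V.arc_head_pair_separated[OF part' sc_Suc deg arc] by blast
  qed
  then have sc'_Suc: "scattered ?\<P>' (vset x' y' a' b')"
    by (rule V'.scattered_merge_unless_pair_split[OF part P Q sc' deg])
  show ?case using sc_Suc sc'_Suc verts_Suc by simp
qed

theorem lemma4p11:
  fixes G :: "'v trigraph"
    and x y x' y' :: 'v and a b a' b' :: "nat \<Rightarrow> 'v"
    and cs :: "('v set \<times> 'v set) list"
  assumes "wf_trigraph G"
    and "vertical_set G x y a b"
    and "vertical_set G x' y' a' b'"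
    and "vset x y a b \<inter> vset x' y' a' b' = {}"
    and "arc G (vset x y a b) x' y'"
    and "attachment_rule G a b {x, y}"
    and "attachment_rule G a' b' {x', y'}"
    and "partial_d_sequence G 4 cs"
    and "i < length cs"
    and "p \<in> vset x' y' a' b'" and "q \<in> vset x' y' a' b'"
    and "involves (cs ! i) p q"
  shows "\<exists>k \<le> i. involves (cs ! k) x y"
proof (rule ccontr)
  assume "\<not> (\<exists>k \<le> i. involves (cs ! k) x y)"
  then have "\<forall>k < Suc i. \<not> involves (cs ! k) x y" by (simp add: less_Suc_eq_le)
  then have "scattered (verts (seq_trigraphs G cs ! Suc i)) (vset x' y' a' b')"
    using scattered_until_pair_contracted[OF assms(1-3,5,8), of "Suc i"] assms(9) by simp
  moreover have "p \<noteq> q \<and> (\<exists>R \<in> verts (seq_trigraphs G cs ! Suc i). p \<in> R \<and> q \<in> R)"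
    by (rule involved_vertices_merged[OF assms(1,8,9,12)])
  ultimately show False using assms(10,11) unfolding scattered_def by blast
qed

end
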